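(* Let $\nu>-1$ be real and let $0<j_1<j_2<\cdots$ be the positive zeros of $J_\nu(\cdot;q^2)$. Then for all $n,m\ge1$, $$\int_0^1 x\,J_\nu(qj_nx;q^2)J_\nu(qj_mx;q^2)\,d_qx=-\tfrac12(1-q)q^{\nu-1}J_{\nu+1}(qj_n;q^2)J_\nu'(j_n;q^2)\,\delta_{n,m},$$ and moreover $$-\tfrac12(1-q)q^{\nu-1}J_{\nu+1}(qj_n;q^2)J_\nu'(j_n;q^2)=\tfrac12(1-q)^2q^{\nu-2}\big(D_qJ_\nu(\cdot;q^2)\big)(j_n)\,J_\nu'(j_n;q^2)=-\tfrac12(1-q)q^{\nu-2}j_n^{-1}J_\nu(qj_n;q^2)J_\nu'(j_n;q^2)=-\tfrac12(1-q)q^{-2}J_{\nu+1}(j_n;q^2)J_\nu'(j_n;q^2).$$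
   Context: Fix $0<q<1$. For $a\in\mathbb C$ put $(a;q)_0=1$, $(a;q)_k=\prod_{i=0}^{k-1}(1-aq^i)$, $(a;q)_\infty=\prod_{i\ge0}(1-aq^i)$. For $\nu\in\mathbb C$ and $x\in\mathbb C\setminus\{0\}$ the Hahn–Exton $q$-Bessel function is $$J_\nu(x;q^2)=\frac{x^\nu}{(q^2;q^2)_\infty}\sum_{k=0}^\infty\frac{(-1)^kq^{k(k+1)}(q^{2\nu+2k+2};q^2)_\infty}{(q^2;q^2)_k}\,x^{2k},$$ with $x^\nu=\exp(\nu\operatorname{Log}x)$ (principal branch). $J_\nu'$ is the ordinary derivative in $x$. The $q$-derivative is $(D_qf)(x)=\frac{f(x)-f(qx)}{(1-q)x}$ for $x\ne0$, and the $q$-integral is $\int_0^z f(x)\,d_qx=(1-q)z\sum_{k\ge0}f(zq^k)q^k$. $\delta_{n,m}$ is the Kronecker delta. *)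

theory Defs
  imports "HOL-Analysis.Analysis"
begin

definition qpoch :: "complex \<Rightarrow> complex \<Rightarrow> nat \<Rightarrow> complex" where
  "qpoch a p k = (\<Prod>i<k. 1 - a * p ^ i)"

definition qpoch_inf :: "complex \<Rightarrow> complex \<Rightarrow> complex" where
  "qpoch_inf a p = (\<Prod>i. 1 - a * p ^ i)"

text \<open>Hahn--Exton q-Bessel function J_nu(x;q^2), with x^nu via the principal branch
  (complex powr uses the principal logarithm).\<close>
definition hej :: "real \<Rightarrow> real \<Rightarrow> complex \<Rightarrow> complex" where
  "hej q \<nu> x = x powr (complex_of_real \<nu>) / qpoch_inf (of_real (q^2)) (of_real (q^2)) *
     (\<Sum>k. (-1)^k * of_real (q ^ (k*(k+1)))
            * qpoch_inf (of_real (q powr (2*\<nu> + 2*real k + 2))) (of_real (q^2))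
            / qpoch (of_real (q^2)) (of_real (q^2)) k * x ^ (2*k))"

definition qder :: "real \<Rightarrow> (complex \<Rightarrow> complex) \<Rightarrow> complex \<Rightarrow> complex" where
  "qder q f x = (f x - f (of_real q * x)) / ((1 - of_real q) * x)"

definition qint :: "real \<Rightarrow> (complex \<Rightarrow> complex) \<Rightarrow> complex \<Rightarrow> complex" where
  "qint q f z = (1 - of_real q) * z * (\<Sum>k. f (z * of_real q ^ k) * of_real q ^ k)"

end

theory Submission
  imports Defs
begin

(*
  Write J_nu(x;q^2) = x^nu G_nu(x^2) / (q^2;q^2)_inf with an entire power series G_nu.
  The contiguous relations of its coefficients give the second-order q-difference equation
  G(z) + q^(2 nu) G(q^4 z) = (1 + q^(2 nu) - q^2 z) G(q^2 z), a three-term recurrence along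
  the sequences alpha_k = G(a q^(2k)) and gamma_k = G(b q^(2k)). Hence the weighted Casoratian
  q^(2 nu N) (alpha_(N+1) gamma_N - alpha_N gamma_(N+1)) telescopes, with increments (b - a)
  times the terms of the q-integral. It vanishes at N = 0 when a and b are zeros of G and tends
  to 0 as N grows because q^(2 nu + 2) < 1, which is where nu > -1 enters; so the q-integral
  vanishes for distinct zeros. For a = b the same identity is applied to alpha and to
  beta_k = q^(2k) G'(a q^(2k)), which solves the differentiated equation with inhomogeneity
  q^(2k+2) alpha_(k+1), and gives -G(a q^2) G'(a). The other forms of the norm follow from the
  contiguous relations at a zero j: J_(nu+1)(q j) = J_nu(q j)/(q j) and
  J_(nu+1)(j) = q^nu J_nu(q j)/j.
*)

lemma convergent_prod_qpoch:
  fixes b p :: complex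
  assumes "norm p < 1"
  shows "convergent_prod (\<lambda>i. 1 - b * p ^ i)"
proof -
  have "summable (\<lambda>i. norm b * norm p ^ i)"
    using assms by (intro summable_mult summable_geometric) auto
  then have "summable (\<lambda>i. norm ((1 - b * p ^ i) - 1))"
    by (simp add: norm_mult norm_power)
  then show ?thesis
    by (intro abs_convergent_prod_imp_convergent_prod summable_imp_abs_convergent_prod)
qed

lemma qpoch_inf_split_head:
  assumes "norm p < 1" "b \<noteq> 1"
  shows "qpoch_inf b p = (1 - b) * qpoch_inf (b * p) p"
proof -
  have "qpoch_inf (b * p) p = (\<Prod>i. 1 - b * p ^ Suc i)"
    unfolding qpoch_inf_def by (simp add: mult.assoc)
  also have "\<dots> = qpoch_inf b p / (1 - b)"
    using prodinf_split_head[OF convergent_prod_qpoch[OF assms(1)], of b] assms(2)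
    by (simp add: qpoch_inf_def)
  finally show ?thesis
    using assms(2) by simp
qed

lemma qpoch_inf_nonzero:
  assumes "norm p < 1" "norm b < 1"
  shows "qpoch_inf b p \<noteq> 0"
  unfolding qpoch_inf_def
proof (rule prodinf_nonzero[OF convergent_prod_qpoch[OF assms(1)]])
  fix i
  have "norm (b * p ^ i) \<le> norm b"
    using assms by (simp add: norm_mult norm_power mult_left_le power_le_one)
  then have "norm (b * p ^ i) \<noteq> norm (1::complex)"
    using assms(2) by simp
  then show "1 - b * p ^ i \<noteq> 0"
    by force
qed

lemma summable_powser_if_ratio_tendsto_0:
  fixes c :: "nat \<Rightarrow> 'a::{real_normed_div_algebra,banach}"
  assumes ratio: "\<And>n. norm (c (Suc n)) \<le> r n * norm (c n)" and "r \<longlonglongrightarrow> 0"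
  shows "summable (\<lambda>n. c n * z ^ n)"
proof -
  have "(\<lambda>n. r n * norm z) \<longlonglongrightarrow> 0"
    using tendsto_mult_left_zero[OF assms(2)] by simp
  then obtain N where N: "\<And>n. n \<ge> N \<Longrightarrow> \<bar>r n * norm z\<bar> < 1/2"
    using LIMSEQ_D[of _ 0 "1/2"] by fastforce
  show ?thesis
  proof (rule summable_ratio_test[of "1/2" N])
    fix n assume "n \<ge> N"
    have "norm (c (Suc n) * z ^ Suc n) \<le> r n * norm (c n) * (norm z * norm z ^ n)"
      using ratio by (simp add: norm_mult norm_power mult_right_mono)
    also have "\<dots> = (r n * norm z) * norm (c n * z ^ n)"
      by (simp add: norm_mult norm_power)
    also have "\<dots> \<le> 1/2 * norm (c n * z ^ n)"
      using N[OF \<open>n \<ge> N\<close>] by (intro mult_right_mono) auto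
    finally show "norm (c (Suc n) * z ^ Suc n) \<le> 1/2 * norm (c n * z ^ n)" .
  qed simp
qed

lemma powr_add_two_mult_nat:
  fixes q :: real
  assumes "0 < q"
  shows "q powr (x + 2 * real k) = q powr x * (q^2)^k"
proof -
  have "q powr (2 * real k) = (q^2)^k"
    using powr_realpow[OF assms, of "2*k"] by (simp add: power_mult)
  then show ?thesis
    by (simp add: powr_add)
qed

lemma powr_two_mult: "0 < x \<Longrightarrow> x powr (2 * a) = (x powr a)^2"
  for x a :: real
  by (simp add: powr_power)

lemma norm_of_real_power2_less_1: "0 < q \<Longrightarrow> q < 1 \<Longrightarrow> norm (complex_of_real (q^2)) < 1"
  by (simp add: norm_power power_less_one_iff)

lemma power2_power_Suc_less_1: "0 < q \<Longrightarrow> q < 1 \<Longrightarrow> (q^2)^Suc k < (1::real)"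
  by (intro power_Suc_less_one) (auto simp: power_less_one_iff)

definition hej_coeff :: "real \<Rightarrow> real \<Rightarrow> nat \<Rightarrow> complex" where
  "hej_coeff q \<nu> k = (-1)^k * of_real (q ^ (k*(k+1)))
     * qpoch_inf (of_real (q powr (2*\<nu> + 2*real k + 2))) (of_real (q^2))
     / qpoch (of_real (q^2)) (of_real (q^2)) k"

lemma hej_coeff_contiguous:
  assumes q: "0 < q" "q < 1" and nu: "\<nu> > -1"
  shows "hej_coeff q \<nu> k = (1 - of_real (q powr (2*\<nu> + 2*real k + 2))) * hej_coeff q (\<nu>+1) k"
proof -
  define b where "b = q powr (2*\<nu> + 2*real k + 2)"
  have "b < 1"
    using powr_less_mono2[of "2*\<nu> + 2*real k + 2" q 1] q nu by (simp add: b_def)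
  moreover have "b * q^2 = q powr (2*(\<nu>+1) + 2*real k + 2)"
    using powr_add_two_mult_nat[OF q(1), of "2*\<nu> + 2*real k + 2" 1] by (simp add: b_def algebra_simps)
  ultimately have "qpoch_inf (of_real b) (of_real (q^2))
      = (1 - of_real b) * qpoch_inf (of_real (q powr (2*(\<nu>+1) + 2*real k + 2))) (of_real (q^2))"
    using qpoch_inf_split_head[OF norm_of_real_power2_less_1[OF q], of "of_real b"]
    by (metis of_real_eq_1_iff of_real_mult order.irrefl)
  then show ?thesis
    by (simp add: hej_coeff_def b_def)
qed

lemma hej_coeff_Suc:
  assumes q: "0 < q" "q < 1"
  shows "(1 - of_real (q^2)^Suc k) * hej_coeff q \<nu> (Suc k) = - (of_real (q^2)^Suc k * hej_coeff q (\<nu>+1) k)"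
proof -
  define Q where "Q = complex_of_real (q^2)"
  define P where "P = qpoch_inf (of_real (q powr (2*(\<nu>+1) + 2*real k + 2))) Q"
  have "(q^2)^Suc k \<noteq> 1"
    using power2_power_Suc_less_1[OF q] by (metis order.irrefl)
  then have nz: "1 - Q^Suc k \<noteq> 0"
    unfolding Q_def of_real_power[symmetric] by (metis of_real_eq_1_iff right_minus_eq)
  have "q ^ (Suc k * (Suc k + 1)) = (q^2)^Suc k * q ^ (k*(k+1))"
  proof -
    have "Suc k * (Suc k + 1) = 2 * Suc k + k*(k+1)"
      by simp
    then show ?thesis
      by (simp only: power_add power_mult)
  qed
  then have "hej_coeff q \<nu> (Suc k)
      = - (Q^Suc k * ((-1)^k * of_real (q ^ (k*(k+1))) * P)) / (qpoch Q Q k * (1 - Q^Suc k))"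
    unfolding hej_coeff_def by (simp add: Q_def P_def qpoch_def algebra_simps)
  then show ?thesis
    using nz by (simp add: hej_coeff_def Q_def P_def)
qed

lemma hej_coeff_recurrence:
  assumes q: "0 < q" "q < 1" and nu: "\<nu> > -1"
  shows "(1 - of_real (q^2)^Suc k) * (1 - of_real (q powr (2*\<nu> + 2*real k + 2))) * hej_coeff q \<nu> (Suc k)
    = - (of_real (q^2)^Suc k * hej_coeff q \<nu> k)"
proof -
  have "(1 - of_real (q^2)^Suc k) * (1 - of_real (q powr (2*\<nu> + 2*real k + 2))) * hej_coeff q \<nu> (Suc k)
      = (1 - of_real (q powr (2*\<nu> + 2*real k + 2))) * ((1 - of_real (q^2)^Suc k) * hej_coeff q \<nu> (Suc k))"
    by (simp only: mult_ac)
  also have "\<dots> = - (of_real (q^2)^Suc k * ((1 - of_real (q powr (2*\<nu> + 2*real k + 2))) * hej_coeff q (\<nu>+1) k))"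
    by (simp only: hej_coeff_Suc[OF q]) (simp add: algebra_simps)
  also have "\<dots> = - (of_real (q^2)^Suc k * hej_coeff q \<nu> k)"
    by (simp only: hej_coeff_contiguous[OF q nu, symmetric])
  finally show ?thesis .
qed

lemma norm_hej_coeff_Suc:
  fixes q \<nu> :: real and k :: nat
  assumes q: "0 < q" "q < 1" and nu: "\<nu> > -1"
  defines "b \<equiv> q powr (2*\<nu> + 2*real k + 2)"
  shows "norm (hej_coeff q \<nu> (Suc k))
    = (q^2)^Suc k / ((1 - (q^2)^Suc k) * (1 - b)) * norm (hej_coeff q \<nu> k)"
proof -
  have "b < 1"
    using powr_less_mono2[of "2*\<nu> + 2*real k + 2" q 1] q nu by (simp add: b_def)
  moreover note q2 = power2_power_Suc_less_1[OF q, of k]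
  ultimately have pos: "0 < (1 - (q^2)^Suc k) * (1 - b)"
    by simp
  have norm_1_minus: "norm (1 - complex_of_real x) = 1 - x" if "x < 1" for x
    using that by (metis abs_of_pos diff_gt_0_iff_gt norm_of_real of_real_1 of_real_diff)
  have "norm (1 - complex_of_real (q^2)^Suc k) = 1 - (q^2)^Suc k"
    using norm_1_minus[OF q2] by (simp only: of_real_power)
  moreover have "norm (1 - complex_of_real b) = 1 - b"
    using norm_1_minus[OF \<open>b < 1\<close>] .
  moreover have "norm (complex_of_real (q^2)^Suc k) = (q^2)^Suc k"
    by (simp only: norm_power norm_of_real abs_of_nonneg zero_le_power2)
  ultimately have "(1 - (q^2)^Suc k) * (1 - b) * norm (hej_coeff q \<nu> (Suc k)) = (q^2)^Suc k * norm (hej_coeff q \<nu> k)"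
    using arg_cong[OF hej_coeff_recurrence[OF q nu, of k], of norm]
    by (simp only: b_def norm_mult norm_minus_cancel)
  then have "norm (hej_coeff q \<nu> (Suc k)) = (q^2)^Suc k * norm (hej_coeff q \<nu> k) / ((1 - (q^2)^Suc k) * (1 - b))"
    by (intro eq_divide_imp) (use pos in linarith, simp add: mult.commute)
  then show ?thesis
    by simp
qed

lemma summable_hej_coeff:
  assumes q: "0 < q" "q < 1" and nu: "\<nu> > -1"
  shows "summable (\<lambda>k. hej_coeff q \<nu> k * y ^ k)"
proof (rule summable_powser_if_ratio_tendsto_0)
  define b where "b k = q powr (2*\<nu> + 2*real k + 2)" for k
  define r where "r k = (q^2)^Suc k / ((1 - (q^2)^Suc k) * (1 - b k))" for k
  show "norm (hej_coeff q \<nu> (Suc k)) \<le> r k * norm (hej_coeff q \<nu> k)" for k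
    using norm_hej_coeff_Suc[OF q nu, of k] by (simp add: r_def b_def)
  have b_eq: "b k = q powr (2*\<nu> + 2) * (q^2)^k" for k
    using powr_add_two_mult_nat[OF q(1), of "2*\<nu> + 2" k] by (simp add: b_def algebra_simps)
  have "b \<longlonglongrightarrow> q powr (2*\<nu> + 2) * 0"
    unfolding b_eq[abs_def] using q by (intro tendsto_intros LIMSEQ_power_zero) (auto simp: power_less_one_iff)
  moreover have "(\<lambda>k. (q^2)^Suc k) \<longlonglongrightarrow> 0"
    using q by (intro LIMSEQ_power_zero LIMSEQ_Suc) (auto simp: power_less_one_iff)
  ultimately have "r \<longlonglongrightarrow> 0 / ((1 - 0) * (1 - q powr (2*\<nu> + 2) * 0))"
    unfolding r_def by (intro tendsto_intros) auto
  then show "r \<longlonglongrightarrow> 0"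
    by simp
qed

definition hej_series :: "real \<Rightarrow> real \<Rightarrow> complex \<Rightarrow> complex" where
  "hej_series q \<nu> y = (\<Sum>k. hej_coeff q \<nu> k * y ^ k)"

definition hej_series_deriv :: "real \<Rightarrow> real \<Rightarrow> complex \<Rightarrow> complex" where
  "hej_series_deriv q \<nu> y = (\<Sum>k. diffs (hej_coeff q \<nu>) k * y ^ k)"

lemma hej_series_has_field_derivative:
  assumes "0 < q" "q < 1" "\<nu> > -1"
  shows "(hej_series q \<nu> has_field_derivative hej_series_deriv q \<nu> y) (at y)"
  unfolding hej_series_def[abs_def] hej_series_deriv_def
  by (rule termdiffs_strong_converges_everywhere[OF summable_hej_coeff[OF assms]])

lemma isCont_hej_series:
  assumes "0 < q" "q < 1" "\<nu> > -1"
  shows "isCont (hej_series q \<nu>) y"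
  using hej_series_has_field_derivative[OF assms] by (rule DERIV_isCont)

lemma isCont_hej_series_deriv:
  assumes "0 < q" "q < 1" "\<nu> > -1"
  shows "isCont (hej_series_deriv q \<nu>) y"
  unfolding hej_series_deriv_def[abs_def]
  by (rule isCont_powser_converges_everywhere[OF termdiff_converges_all[OF summable_hej_coeff[OF assms]]])

lemma hej_series_contiguous:
  assumes q: "0 < q" "q < 1" and nu: "\<nu> > -1"
  shows "hej_series q \<nu> y
    = hej_series q (\<nu>+1) y - of_real (q powr (2*\<nu> + 2)) * hej_series q (\<nu>+1) (of_real (q^2) * y)"
proof -
  have nu': "\<nu> + 1 > -1"
    using nu by simp
  have "hej_coeff q \<nu> k * y^k
      = hej_coeff q (\<nu>+1) k * y^k - of_real (q powr (2*\<nu> + 2)) * (hej_coeff q (\<nu>+1) k * (of_real (q^2) * y)^k)" for k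
    using powr_add_two_mult_nat[OF q(1), of "2*\<nu> + 2" k]
    by (simp add: hej_coeff_contiguous[OF q nu, of k] algebra_simps power_mult_distrib)
  then show ?thesis
    unfolding hej_series_def
    using suminf_diff[OF summable_hej_coeff[OF q nu'] summable_mult[OF summable_hej_coeff[OF q nu']]]
      suminf_mult[OF summable_hej_coeff[OF q nu']]
    by simp
qed

lemma hej_series_q_difference:
  assumes q: "0 < q" "q < 1" and nu: "\<nu> > -1"
  shows "hej_series q \<nu> (of_real (q^2) * y)
    = hej_series q \<nu> y + of_real (q^2) * y * hej_series q (\<nu>+1) (of_real (q^2) * y)"
proof -
  define Q where "Q = complex_of_real (q^2)"
  define f where "f k = hej_coeff q \<nu> k * (Q * y)^k - hej_coeff q \<nu> k * y^k" for k
  have nu': "\<nu> + 1 > -1"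
    using nu by simp
  have "f (Suc k) = Q * y * (hej_coeff q (\<nu>+1) k * (Q * y)^k)" for k
  proof -
    have "f (Suc k) = - ((1 - Q^Suc k) * hej_coeff q \<nu> (Suc k)) * y^Suc k"
      by (simp add: f_def algebra_simps power_mult_distrib)
    also have "\<dots> = Q^Suc k * hej_coeff q (\<nu>+1) k * y^Suc k"
      by (simp only: Q_def hej_coeff_Suc[OF q] minus_minus)
    also have "\<dots> = Q * y * (hej_coeff q (\<nu>+1) k * (Q * y)^k)"
      by (simp add: power_mult_distrib)
    finally show ?thesis .
  qed
  moreover have "(\<lambda>k. Q * y * (hej_coeff q (\<nu>+1) k * (Q * y)^k)) sums (Q * y * hej_series q (\<nu>+1) (Q * y))"
    unfolding hej_series_def by (intro sums_mult summable_sums summable_hej_coeff[OF q nu'])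
  ultimately have "f sums (Q * y * hej_series q (\<nu>+1) (Q * y) + f 0)"
    by (simp add: sums_Suc_iff[symmetric])
  moreover have "f sums (hej_series q \<nu> (Q * y) - hej_series q \<nu> y)"
    unfolding f_def hej_series_def by (intro sums_diff summable_sums summable_hej_coeff[OF q nu])
  ultimately have "hej_series q \<nu> (Q * y) - hej_series q \<nu> y = Q * y * hej_series q (\<nu>+1) (Q * y)"
    by (simp add: f_def sums_unique2)
  then show ?thesis
    by (simp add: Q_def algebra_simps)
qed

lemma hej_series_q_difference_equation:
  assumes q: "0 < q" "q < 1" and nu: "\<nu> > -1"
  defines "Q \<equiv> complex_of_real (q^2)" and "p \<equiv> complex_of_real (q powr (2*\<nu>))"
  shows "hej_series q \<nu> z + p * hej_series q \<nu> (Q^2 * z) = (1 + p - Q * z) * hej_series q \<nu> (Q * z)"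
proof -
  let ?G = "hej_series q \<nu>" and ?H = "hej_series q (\<nu>+1)"
  have "p * Q = of_real (q powr (2*\<nu> + 2))"
    using powr_add_two_mult_nat[OF q(1), of "2*\<nu>" 1] by (simp add: p_def Q_def)
  then have contiguous: "?G y = ?H y - p * Q * ?H (Q * y)" for y
    using hej_series_contiguous[OF q nu, of y] by (simp add: Q_def)
  note difference = hej_series_q_difference[OF q nu, folded Q_def]
  have "?G z = ?G (Q * z) - Q * z * ?H (Q * z)"
    using difference[of z] by simp
  moreover have "?G (Q^2 * z) = ?G (Q * z) + Q * (Q * z) * ?H (Q * (Q * z))"
    using difference[of "Q * z"] by (simp add: power2_eq_square mult.assoc)
  moreover have "?H (Q * z) = ?G (Q * z) + p * Q * ?H (Q * (Q * z))"
    using contiguous[of "Q * z"] by simp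
  ultimately show ?thesis
    by (simp add: algebra_simps)
qed

lemma hej_series_deriv_q_difference_equation:
  assumes q: "0 < q" "q < 1" and nu: "\<nu> > -1"
  defines "Q \<equiv> complex_of_real (q^2)" and "p \<equiv> complex_of_real (q powr (2*\<nu>))"
  shows "hej_series_deriv q \<nu> z + p * Q^2 * hej_series_deriv q \<nu> (Q^2 * z)
    = - Q * hej_series q \<nu> (Q * z) + (1 + p - Q * z) * Q * hej_series_deriv q \<nu> (Q * z)"
proof -
  let ?G = "hej_series q \<nu>" and ?D = "hej_series_deriv q \<nu>"
  note G' = hej_series_has_field_derivative[OF q nu]
  have "(\<lambda>z. ?G z + p * ?G (Q^2 * z)) = (\<lambda>z. (1 + p - Q * z) * ?G (Q * z))"
    using hej_series_q_difference_equation[OF q nu] by (simp add: Q_def p_def)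
  moreover have "((\<lambda>z. ?G z + p * ?G (Q^2 * z)) has_field_derivative ?D z + p * (?D (Q^2 * z) * Q^2)) (at z)"
    by (intro DERIV_add DERIV_cmult DERIV_chain2[OF G'] G' DERIV_cmult_Id)
  moreover have "((\<lambda>z. (1 + p - Q * z) * ?G (Q * z)) has_field_derivative
      - Q * ?G (Q * z) + (1 + p - Q * z) * (?D (Q * z) * Q)) (at z)"
    by (rule DERIV_mult'[where f = "\<lambda>z. 1 + p - Q * z", THEN DERIV_cong])
      (auto intro!: derivative_eq_intros DERIV_chain2[OF G'])
  ultimately show ?thesis
    using DERIV_unique by (fastforce simp: algebra_simps)
qed

lemma casoratian_telescoping_sums:
  fixes \<alpha> \<gamma> u v e :: "nat \<Rightarrow> 'a::real_normed_field" and p :: 'a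
  assumes rec_\<alpha>: "\<And>k. \<alpha> k + p * \<alpha> (k+2) = u k * \<alpha> (k+1)"
    and rec_\<gamma>: "\<And>k. \<gamma> k + p * \<gamma> (k+2) = v k * \<gamma> (k+1) - e k * \<alpha> (k+1)"
    and lim: "(\<lambda>N. p^N * (\<alpha> (N+1) * \<gamma> N - \<alpha> N * \<gamma> (N+1))) \<longlonglongrightarrow> 0"
  shows "(\<lambda>k. p^k * ((u k - v k) * \<alpha> (k+1) * \<gamma> (k+1) + e k * \<alpha> (k+1)^2))
    sums (\<alpha> 0 * \<gamma> 1 - \<alpha> 1 * \<gamma> 0)"
proof -
  define V where "V N = p^N * (\<alpha> (N+1) * \<gamma> N - \<alpha> N * \<gamma> (N+1))" for N
  have "V (Suc k) - V k = p^k * ((u k - v k) * \<alpha> (k+1) * \<gamma> (k+1) + e k * \<alpha> (k+1)^2)" for k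
  proof -
    have \<alpha>: "\<alpha> k = u k * \<alpha> (k+1) - p * \<alpha> (k+2)"
      using rec_\<alpha>[of k] by (simp add: algebra_simps)
    have \<gamma>: "\<gamma> k = v k * \<gamma> (k+1) - e k * \<alpha> (k+1) - p * \<gamma> (k+2)"
      using rec_\<gamma>[of k] by (simp add: algebra_simps)
    have "V (Suc k) - V k
        = p^k * (p * (\<alpha> (k+2) * \<gamma> (k+1) - \<alpha> (k+1) * \<gamma> (k+2)) - \<alpha> (k+1) * \<gamma> k + \<alpha> k * \<gamma> (k+1))"
      by (simp add: V_def algebra_simps numeral_2_eq_2)
    also have "\<dots> = p^k * ((u k - v k) * \<alpha> (k+1) * \<gamma> (k+1) + e k * \<alpha> (k+1)^2)"
      by (simp only: \<alpha> \<gamma>) (simp add: algebra_simps power2_eq_square)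
    finally show ?thesis .
  qed
  then have "(\<lambda>N. \<Sum>k<N. p^k * ((u k - v k) * \<alpha> (k+1) * \<gamma> (k+1) + e k * \<alpha> (k+1)^2)) = (\<lambda>N. V N - V 0)"
    by (simp flip: sum_lessThan_telescope)
  moreover have "(\<lambda>N. V N - V 0) \<longlonglongrightarrow> 0 - V 0"
    using lim unfolding V_def by (intro tendsto_diff) auto
  ultimately show ?thesis
    unfolding sums_def by (simp add: V_def)
qed

lemma tendsto_comp_geometric:
  fixes f :: "'a::real_normed_field \<Rightarrow> 'b::topological_space"
  assumes "isCont f 0" "norm Q < 1"
  shows "(\<lambda>N. f (c * Q^N)) \<longlonglongrightarrow> f 0"
proof -
  have "(\<lambda>N. c * Q^N) \<longlonglongrightarrow> c * 0"
    by (intro tendsto_intros LIMSEQ_power_zero assms(2))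
  then show ?thesis
    using isCont_tendsto_compose[OF assms(1)] by simp
qed

lemma norm_powr_two_nu_mult_power2_less_1:
  assumes "0 < q" "q < 1" "\<nu> > -1"
  shows "norm (complex_of_real (q powr (2*\<nu>)) * complex_of_real (q^2)) < 1"
proof -
  have "q powr (2*\<nu>) * q^2 = q powr (2*\<nu> + 2)"
    using powr_add_two_mult_nat[OF assms(1), of "2*\<nu>" 1] by simp
  moreover have "q powr (2*\<nu> + 2) < 1"
    using powr_less_mono2[of "2*\<nu> + 2" q 1] assms by simp
  ultimately have "norm (complex_of_real (q powr (2*\<nu>) * q^2)) < 1"
    by simp
  then show ?thesis
    by (simp only: of_real_mult)
qed

lemma hej_series_zeros_orthogonal:
  assumes q: "0 < q" "q < 1" and nu: "\<nu> > -1"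
    and zeros: "hej_series q \<nu> a = 0" "hej_series q \<nu> b = 0" and "a \<noteq> b"
  defines "Q \<equiv> complex_of_real (q^2)" and "p \<equiv> complex_of_real (q powr (2*\<nu>))"
  shows "(\<lambda>k. p^k * Q^(k+1) * (hej_series q \<nu> (a * Q^(k+1)) * hej_series q \<nu> (b * Q^(k+1)))) sums 0"
proof -
  let ?G = "hej_series q \<nu>" and ?H = "hej_series q (\<nu>+1)"
  define \<alpha> where "\<alpha> k = ?G (a * Q^k)" for k
  define \<gamma> where "\<gamma> k = ?G (b * Q^k)" for k
  have rec: "?G (c * Q^k) + p * ?G (c * Q^(k+2)) = (1 + p - c * Q^(k+1)) * ?G (c * Q^(k+1))" for c k
    using hej_series_q_difference_equation[OF q nu, of "c * Q^k"]
    by (simp add: Q_def p_def algebra_simps power_add power2_eq_square)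
  have \<alpha>_Suc: "\<alpha> (Suc N) = \<alpha> N + Q^N * (Q * a * ?H (a * Q * Q^N))"
    and \<gamma>_Suc: "\<gamma> (Suc N) = \<gamma> N + Q^N * (Q * b * ?H (b * Q * Q^N))" for N
    using hej_series_q_difference[OF q nu, folded Q_def, of "a * Q^N"]
      hej_series_q_difference[OF q nu, folded Q_def, of "b * Q^N"]
    by (simp_all add: \<alpha>_def \<gamma>_def mult_ac)
  have "norm Q < 1" "norm (p * Q) < 1"
    unfolding Q_def p_def
    by (intro norm_of_real_power2_less_1 norm_powr_two_nu_mult_power2_less_1 q nu)+
  moreover have "\<nu> + 1 > -1"
    using nu by simp
  ultimately have "(\<lambda>N. (p*Q)^N * (Q * (a * ?H (a * Q * Q^N) * \<gamma> N - \<alpha> N * (b * ?H (b * Q * Q^N)))))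
      \<longlonglongrightarrow> 0 * (Q * (a * ?H 0 * ?G 0 - ?G 0 * (b * ?H 0)))"
    unfolding \<alpha>_def \<gamma>_def
    by (intro tendsto_intros LIMSEQ_power_zero tendsto_comp_geometric isCont_hej_series q nu)
  then have "(\<lambda>N. p^N * (\<alpha> (N+1) * \<gamma> N - \<alpha> N * \<gamma> (N+1))) \<longlonglongrightarrow> 0"
    by (simp add: \<alpha>_Suc \<gamma>_Suc algebra_simps power_mult_distrib)
  with rec have "(\<lambda>k. p^k * (((1 + p - a * Q^(k+1)) - (1 + p - b * Q^(k+1))) * \<alpha> (k+1) * \<gamma> (k+1)
      + 0 * \<alpha> (k+1)^2)) sums (\<alpha> 0 * \<gamma> 1 - \<alpha> 1 * \<gamma> 0)"
    by (intro casoratian_telescoping_sums) (simp_all add: \<alpha>_def \<gamma>_def)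
  then have "(\<lambda>k. (b - a) * (p^k * Q^(k+1) * (\<alpha> (k+1) * \<gamma> (k+1)))) sums 0"
    using zeros by (simp add: \<alpha>_def \<gamma>_def algebra_simps)
  then have "(\<lambda>k. p^k * Q^(k+1) * (\<alpha> (k+1) * \<gamma> (k+1))) sums (0 / (b - a))"
    using \<open>a \<noteq> b\<close> by (intro sums_mult_D) auto
  then show ?thesis
    by (simp add: \<alpha>_def \<gamma>_def)
qed

lemma hej_series_zero_norm:
  assumes q: "0 < q" "q < 1" and nu: "\<nu> > -1" and zero: "hej_series q \<nu> a = 0"
  defines "Q \<equiv> complex_of_real (q^2)" and "p \<equiv> complex_of_real (q powr (2*\<nu>))"
  shows "(\<lambda>k. p^k * Q^(k+1) * hej_series q \<nu> (a * Q^(k+1))^2)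
    sums (- hej_series q \<nu> (a * Q) * hej_series_deriv q \<nu> a)"
proof -
  let ?G = "hej_series q \<nu>" and ?D = "hej_series_deriv q \<nu>"
  define \<alpha> where "\<alpha> k = ?G (a * Q^k)" for k
  define \<beta> where "\<beta> k = Q^k * ?D (a * Q^k)" for k
  have rec_\<alpha>: "\<alpha> k + p * \<alpha> (k+2) = (1 + p - a * Q^(k+1)) * \<alpha> (k+1)" for k
    using hej_series_q_difference_equation[OF q nu, of "a * Q^k"]
    by (simp add: \<alpha>_def Q_def p_def algebra_simps power_add power2_eq_square)
  have rec_\<beta>: "\<beta> k + p * \<beta> (k+2) = (1 + p - a * Q^(k+1)) * \<beta> (k+1) - Q^(k+1) * \<alpha> (k+1)" for k
    using arg_cong[OF hej_series_deriv_q_difference_equation[OF q nu, of "a * Q^k"], of "\<lambda>x. Q^k * x"]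
    by (simp add: \<alpha>_def \<beta>_def Q_def p_def algebra_simps power_add power2_eq_square)
  have "norm Q < 1" "norm (p * Q) < 1"
    unfolding Q_def p_def
    by (intro norm_of_real_power2_less_1 norm_powr_two_nu_mult_power2_less_1 q nu)+
  then have "(\<lambda>N. (p*Q)^N * (?G (a * Q * Q^N) * ?D (a * Q^N) - ?G (a * Q^N) * Q * ?D (a * Q * Q^N)))
      \<longlonglongrightarrow> 0 * (?G 0 * ?D 0 - ?G 0 * Q * ?D 0)"
    by (intro tendsto_intros LIMSEQ_power_zero tendsto_comp_geometric isCont_hej_series
        isCont_hej_series_deriv q nu)
  then have "(\<lambda>N. p^N * (\<alpha> (N+1) * \<beta> N - \<alpha> N * \<beta> (N+1))) \<longlonglongrightarrow> 0"
    by (simp add: \<alpha>_def \<beta>_def algebra_simps power_mult_distrib)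
  with rec_\<alpha> rec_\<beta> have "(\<lambda>k. p^k * (((1 + p - a * Q^(k+1)) - (1 + p - a * Q^(k+1))) * \<alpha> (k+1) * \<beta> (k+1)
      + Q^(k+1) * \<alpha> (k+1)^2)) sums (\<alpha> 0 * \<beta> 1 - \<alpha> 1 * \<beta> 0)"
    by (rule casoratian_telescoping_sums)
  then show ?thesis
    using zero by (simp add: \<alpha>_def \<beta>_def mult.assoc)
qed

lemma qpoch_inf_power2_nonzero:
  assumes "0 < q" "q < 1"
  shows "qpoch_inf (of_real (q^2)) (of_real (q^2)) \<noteq> 0"
  using qpoch_inf_nonzero norm_of_real_power2_less_1[OF assms] by blast

lemma hej_eq_hej_series:
  "hej q \<nu> z = z powr of_real \<nu> / qpoch_inf (of_real (q^2)) (of_real (q^2)) * hej_series q \<nu> (z^2)"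
  unfolding hej_def hej_series_def hej_coeff_def by (simp add: power_mult mult.assoc)

lemma hej_of_real:
  assumes "x > 0"
  shows "hej q \<nu> (of_real x)
    = of_real (x powr \<nu>) / qpoch_inf (of_real (q^2)) (of_real (q^2)) * hej_series q \<nu> (of_real (x^2))"
  using assms by (simp add: hej_eq_hej_series powr_of_real)

lemma hej_eq_0_iff:
  assumes "0 < q" "q < 1" "x > 0"
  shows "hej q \<nu> (of_real x) = 0 \<longleftrightarrow> hej_series q \<nu> (of_real (x^2)) = 0"
  using assms qpoch_inf_power2_nonzero[OF assms(1,2)] by (simp add: hej_of_real)

lemma deriv_hej_at_zero:
  assumes q: "0 < q" "q < 1" and nu: "\<nu> > -1" and "x > 0" and zero: "hej q \<nu> (of_real x) = 0"
  shows "deriv (hej q \<nu>) (of_real x)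
    = 2 * of_real (x powr \<nu> * x) / qpoch_inf (of_real (q^2)) (of_real (q^2))
      * hej_series_deriv q \<nu> (of_real (x^2))"
proof -
  define C where "C = qpoch_inf (complex_of_real (q^2)) (of_real (q^2))"
  have "complex_of_real x \<notin> \<real>\<^sub>\<le>\<^sub>0"
    using \<open>x > 0\<close> by (auto simp: nonpos_Reals_def)
  then have "((\<lambda>z. z powr of_real \<nu>) has_field_derivative of_real \<nu> * of_real x powr (of_real \<nu> - 1))
      (at (complex_of_real x))"
    by (rule has_field_derivative_powr)
  moreover have "((\<lambda>z. hej_series q \<nu> (z^2)) has_field_derivative
      hej_series_deriv q \<nu> (of_real x ^ 2) * (2 * of_real x)) (at (of_real x))"
    by (rule DERIV_chain2[OF hej_series_has_field_derivative[OF q nu]]) (auto intro!: derivative_eq_intros)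
  ultimately have "deriv (hej q \<nu>) (of_real x)
      = of_real x powr of_real \<nu> / C * (hej_series_deriv q \<nu> (of_real x ^ 2) * (2 * of_real x))
        + of_real \<nu> * of_real x powr (of_real \<nu> - 1) / C * hej_series q \<nu> (of_real x ^ 2)"
    unfolding hej_eq_hej_series[abs_def] C_def[symmetric]
    by (intro DERIV_imp_deriv DERIV_mult' DERIV_cdivide)
  then show ?thesis
    using zero \<open>x > 0\<close> q by (simp add: C_def hej_eq_0_iff powr_of_real)
qed

lemma hej_Suc_at_scaled_zero:
  assumes q: "0 < q" "q < 1" and nu: "\<nu> > -1" and "x > 0" and zero: "hej q \<nu> (of_real x) = 0"
  shows "hej q (\<nu>+1) (of_real (q*x)) = hej q \<nu> (of_real (q*x)) / of_real (q*x)"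
proof -
  have qx: "q * x > 0"
    using q \<open>x > 0\<close> by simp
  have "hej_series q \<nu> (of_real ((q*x)^2)) = of_real ((q*x)^2) * hej_series q (\<nu>+1) (of_real ((q*x)^2))"
    using hej_series_q_difference[OF q nu, of "of_real (x^2)"] zero hej_eq_0_iff[OF q \<open>x > 0\<close>]
    by (simp add: power_mult_distrib)
  moreover have "(q*x) powr (\<nu>+1) = (q*x) powr \<nu> * (q*x)"
    using qx by (simp add: powr_add)
  ultimately show ?thesis
    unfolding hej_of_real[OF qx] using qx by (simp add: power2_eq_square)
qed

lemma hej_Suc_at_zero:
  assumes q: "0 < q" "q < 1" and nu: "\<nu> > -1" and "x > 0" and zero: "hej q \<nu> (of_real x) = 0"
  shows "hej q (\<nu>+1) (of_real x) = of_real (q powr \<nu>) * hej q \<nu> (of_real (q*x)) / of_real x"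
proof -
  define C where "C = qpoch_inf (complex_of_real (q^2)) (of_real (q^2))"
  have qx: "q * x > 0"
    using q \<open>x > 0\<close> by simp
  have "hej_series q (\<nu>+1) (of_real (x^2))
      = of_real (q powr (2*\<nu> + 2)) * hej_series q (\<nu>+1) (of_real (q^2) * of_real (x^2))"
    using hej_series_contiguous[OF q nu, of "of_real (x^2)"] zero hej_eq_0_iff[OF q \<open>x > 0\<close>] by simp
  also have "\<dots> = of_real (q powr (2*\<nu>) / x^2) * hej_series q \<nu> (of_real ((q*x)^2))"
    using hej_series_q_difference[OF q nu, of "of_real (x^2)"] zero hej_eq_0_iff[OF q \<open>x > 0\<close>]
      powr_add_two_mult_nat[OF q(1), of "2*\<nu>" 1] \<open>x > 0\<close> q
    by (simp add: power_mult_distrib field_simps)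
  finally have "hej q (\<nu>+1) (of_real x)
      = of_real (x powr (\<nu>+1)) / C * (of_real (q powr (2*\<nu>) / x^2) * hej_series q \<nu> (of_real ((q*x)^2)))"
    by (simp only: hej_of_real[OF \<open>x > 0\<close>] C_def)
  also have "\<dots> = of_real (x powr (\<nu>+1) * (q powr (2*\<nu>) / x^2)) / C * hej_series q \<nu> (of_real ((q*x)^2))"
    by (simp add: mult_ac)
  also have "x powr (\<nu>+1) * (q powr (2*\<nu>) / x^2) = q powr \<nu> * (q*x) powr \<nu> / x"
    unfolding powr_two_mult[OF q(1)] using q \<open>x > 0\<close>
    by (simp add: powr_add powr_mult power2_eq_square field_simps)
  finally show ?thesis
    unfolding hej_of_real[OF qx] C_def by (simp add: mult_ac)
qed

lemma hej_of_real_mult_power: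
  assumes "0 < q" "x > 0"
  shows "hej q \<nu> (of_real (q*x) * of_real q ^ k)
    = of_real (x powr \<nu>) * of_real (q powr \<nu>)^(k+1) / qpoch_inf (of_real (q^2)) (of_real (q^2))
      * hej_series q \<nu> (of_real (x^2) * of_real (q^2)^(k+1))"
proof -
  have "of_real (q*x) * complex_of_real q ^ k = of_real (x * q^(k+1))"
    by simp
  moreover have "(x * q^(k+1)) powr \<nu> = x powr \<nu> * (q powr \<nu>)^(k+1)"
    using assms by (simp add: powr_mult powr_power powr_realpow[symmetric] powr_powr mult.commute
        del: of_nat_Suc)
  moreover have "complex_of_real ((x * q^(k+1))^2) = of_real (x^2) * of_real (q^2)^(k+1)"
    by (simp add: power_mult_distrib power_mult[symmetric] mult.commute)
  ultimately show ?thesis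
    using assms by (simp only: hej_of_real mult_pos_pos zero_less_power) simp
qed

lemma qint_hej_product:
  fixes q \<nu> a b :: real
  assumes q: "0 < q" "q < 1" and "a > 0" "b > 0"
  defines "Q \<equiv> complex_of_real (q^2)" and "p \<equiv> complex_of_real (q powr (2*\<nu>))"
    and "C \<equiv> qpoch_inf (of_real (q^2)) (of_real (q^2))"
  assumes S: "(\<lambda>k. p^k * Q^(k+1)
      * (hej_series q \<nu> (of_real (a^2) * Q^(k+1)) * hej_series q \<nu> (of_real (b^2) * Q^(k+1)))) sums S"
  shows "qint q (\<lambda>x. x * hej q \<nu> (of_real (q*a) * x) * hej q \<nu> (of_real (q*b) * x)) 1
    = (1 - of_real q) * (of_real (a powr \<nu> * b powr \<nu>) * p / (C^2 * Q) * S)"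
proof -
  define s where "s = complex_of_real (q powr \<nu>)"
  have p: "p = s^2"
    using q by (simp add: p_def s_def powr_two_mult)
  have "Q \<noteq> 0" "C \<noteq> 0"
    using q qpoch_inf_power2_nonzero[OF q] by (simp_all add: Q_def C_def)
  have weight: "of_real q ^ k * of_real q ^ k * s^(k+1) * s^(k+1) = p^k * Q^(k+1) * (p / Q)" for k
    using \<open>Q \<noteq> 0\<close> unfolding p Q_def
    by (simp add: field_simps power2_eq_square power_mult_distrib)
  define f where "f x = x * hej q \<nu> (of_real (q*a) * x) * hej q \<nu> (of_real (q*b) * x)" for x
  define X where "X k = hej_series q \<nu> (of_real (a^2) * Q^(k+1)) * hej_series q \<nu> (of_real (b^2) * Q^(k+1))"
    for k
  define K where "K = of_real (a powr \<nu> * b powr \<nu>) * p / (C^2 * Q)"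
  have "f (of_real q ^ k) * of_real q ^ k
      = of_real (a powr \<nu> * b powr \<nu>) / C^2 * X k * (of_real q ^ k * of_real q ^ k * s^(k+1) * s^(k+1))" for k
    unfolding f_def X_def hej_of_real_mult_power[OF q(1) \<open>a > 0\<close>, folded Q_def C_def]
      hej_of_real_mult_power[OF q(1) \<open>b > 0\<close>, folded Q_def C_def]
    by (simp add: s_def power2_eq_square mult_ac)
  then have "f (1 * of_real q ^ k) * of_real q ^ k = K * (p^k * Q^(k+1) * X k)" for k
    unfolding weight K_def using \<open>Q \<noteq> 0\<close> by (simp add: mult_ac)
  then have "(\<Sum>k. f (1 * of_real q ^ k) * of_real q ^ k) = K * S"
    using sums_unique[OF sums_mult[OF S[folded X_def]], of K] by simp
  then show ?thesis
    unfolding qint_def f_def K_def by simp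
qed

lemma qint_hej_zeros_orthogonal:
  assumes q: "0 < q" "q < 1" and nu: "\<nu> > -1" and "a > 0" "b > 0" "a \<noteq> b"
    and zeros: "hej q \<nu> (of_real a) = 0" "hej q \<nu> (of_real b) = 0"
  shows "qint q (\<lambda>x. x * hej q \<nu> (of_real (q*a) * x) * hej q \<nu> (of_real (q*b) * x)) 1 = 0"
proof -
  have "a^2 \<noteq> b^2"
    using \<open>a > 0\<close> \<open>b > 0\<close> \<open>a \<noteq> b\<close> by (simp add: power2_eq_iff_nonneg)
  then have "complex_of_real (a^2) \<noteq> of_real (b^2)"
    by (metis of_real_eq_iff)
  with zeros have "(\<lambda>k. of_real (q powr (2*\<nu>))^k * of_real (q^2)^(k+1)
      * (hej_series q \<nu> (of_real (a^2) * of_real (q^2)^(k+1)) * hej_series q \<nu> (of_real (b^2) * of_real (q^2)^(k+1)))) sums 0"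
    by (intro hej_series_zeros_orthogonal q nu) (simp_all add: hej_eq_0_iff[OF q] \<open>a > 0\<close> \<open>b > 0\<close>)
  from qint_hej_product[OF q \<open>a > 0\<close> \<open>b > 0\<close> this] show ?thesis
    by simp
qed

lemma qint_hej_zero_norm:
  assumes q: "0 < q" "q < 1" and nu: "\<nu> > -1" and "a > 0" and zero: "hej q \<nu> (of_real a) = 0"
  shows "qint q (\<lambda>x. x * hej q \<nu> (of_real (q*a) * x) * hej q \<nu> (of_real (q*a) * x)) 1
    = - (1/2) * (1 - of_real q) * of_real (q powr (\<nu> - 2)) / of_real a
      * hej q \<nu> (of_real (q * a)) * deriv (hej q \<nu>) (of_real a)"
proof -
  define C where "C = qpoch_inf (complex_of_real (q^2)) (of_real (q^2))"
  define G where "G = hej_series q \<nu> (of_real (a^2) * of_real (q^2))"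
  define D where "D = hej_series_deriv q \<nu> (of_real (a^2))"
  have "C \<noteq> 0"
    using qpoch_inf_power2_nonzero[OF q] by (simp add: C_def)
  have "hej_series q \<nu> (of_real (a^2)) = 0"
    using zero hej_eq_0_iff[OF q \<open>a > 0\<close>] by simp
  from hej_series_zero_norm[OF q nu this]
  have "(\<lambda>k. of_real (q powr (2*\<nu>))^k * of_real (q^2)^(k+1)
      * (hej_series q \<nu> (of_real (a^2) * of_real (q^2)^(k+1)) * hej_series q \<nu> (of_real (a^2) * of_real (q^2)^(k+1))))
      sums (- G * D)"
    by (simp only: G_def D_def power2_eq_square mult_minus_left)
  then have "qint q (\<lambda>x. x * hej q \<nu> (of_real (q*a) * x) * hej q \<nu> (of_real (q*a) * x)) 1
      = (1 - of_real q) * (of_real (a powr \<nu> * a powr \<nu>) * of_real (q powr (2*\<nu>)) / (C^2 * of_real (q^2)) * (- G * D))"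
    unfolding C_def by (rule qint_hej_product[OF q \<open>a > 0\<close> \<open>a > 0\<close>])
  also have "\<dots> = - (1 - of_real q) * (of_real (a powr \<nu> * a powr \<nu> * q powr (2*\<nu>) / q^2) / C^2 * (G * D))"
    using \<open>C \<noteq> 0\<close> q by (simp add: field_simps)
  also have "a powr \<nu> * a powr \<nu> * q powr (2*\<nu>) / q^2 = q powr (\<nu> - 2) * (q*a) powr \<nu> * a powr \<nu>"
    using q \<open>a > 0\<close> by (simp add: powr_two_mult powr_diff powr_mult power2_eq_square)
  also have "- (1 - of_real q) * (of_real (q powr (\<nu> - 2) * (q*a) powr \<nu> * a powr \<nu>) / C^2 * (G * D))
      = - (1/2) * (1 - of_real q) * of_real (q powr (\<nu> - 2)) / of_real a
        * (of_real ((q*a) powr \<nu>) / C * G) * (2 * of_real (a powr \<nu> * a) / C * D)"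
    using \<open>C \<noteq> 0\<close> \<open>a > 0\<close> by (simp add: field_simps power2_eq_square)
  also have "of_real ((q*a) powr \<nu>) / C * G = hej q \<nu> (of_real (q * a))"
    unfolding C_def G_def hej_of_real[OF mult_pos_pos[OF q(1) \<open>a > 0\<close>]]
    by (simp add: power_mult_distrib mult.commute)
  also have "2 * of_real (a powr \<nu> * a) / C * D = deriv (hej q \<nu>) (of_real a)"
    using deriv_hej_at_zero[OF q nu \<open>a > 0\<close> zero] by (simp add: C_def D_def)
  finally show ?thesis .
qed

lemma qint_hej_zeros:
  assumes q: "0 < q" "q < 1" and nu: "\<nu> > -1" and "a > 0" "b > 0"
    and zeros: "hej q \<nu> (of_real a) = 0" "hej q \<nu> (of_real b) = 0"
  shows "qint q (\<lambda>x. x * hej q \<nu> (of_real (q*a) * x) * hej q \<nu> (of_real (q*b) * x)) 1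
    = - (1/2) * (1 - of_real q) * of_real (q powr (\<nu> - 2)) / of_real a
      * hej q \<nu> (of_real (q * a)) * deriv (hej q \<nu>) (of_real a) * (if a = b then 1 else 0)"
  using qint_hej_zeros_orthogonal[OF q nu assms(4,5) _ zeros] qint_hej_zero_norm[OF q nu assms(4) zeros(1)]
  by (cases "a = b") simp_all

lemma hej_zero_norm_constant_forms:
  assumes q: "0 < q" "q < 1" and nu: "\<nu> > -1" and "a > 0" and zero: "hej q \<nu> (of_real a) = 0"
  defines "E \<equiv> - (1/2) * (1 - of_real q) * of_real (q powr (\<nu> - 2)) / of_real a * hej q \<nu> (of_real (q * a))"
  shows "- (1/2) * (1 - of_real q) * of_real (q powr (\<nu> - 1)) * hej q (\<nu> + 1) (of_real (q * a)) = E"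
    and "(1/2) * (1 - of_real q)^2 * of_real (q powr (\<nu> - 2)) * qder q (hej q \<nu>) (of_real a) = E"
    and "- (1/2) * (1 - of_real q) * of_real (q powr (-2)) * hej q (\<nu> + 1) (of_real a) = E"
proof -
  have powr: "q powr (\<nu> - 1) = q powr (\<nu> - 2) * q" "q powr (\<nu> - 2) = q powr (-2) * q powr \<nu>"
    using q powr_add[of q "\<nu> - 2" 1] by (simp_all add: powr_add[symmetric])
  show "- (1/2) * (1 - of_real q) * of_real (q powr (\<nu> - 1)) * hej q (\<nu> + 1) (of_real (q * a)) = E"
    unfolding hej_Suc_at_scaled_zero[OF q nu \<open>a > 0\<close> zero] powr(1) E_def
    using \<open>a > 0\<close> q by (simp add: field_simps)
  show "(1/2) * (1 - of_real q)^2 * of_real (q powr (\<nu> - 2)) * qder q (hej q \<nu>) (of_real a) = E"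
    using zero \<open>a > 0\<close> q by (simp add: E_def qder_def field_simps power2_eq_square)
  show "- (1/2) * (1 - of_real q) * of_real (q powr (-2)) * hej q (\<nu> + 1) (of_real a) = E"
    unfolding hej_Suc_at_zero[OF q nu \<open>a > 0\<close> zero] powr(2) E_def
    using \<open>a > 0\<close> by (simp add: field_simps)
qed

theorem proposition3p5:
  fixes q \<nu> :: real and j :: "nat \<Rightarrow> real"
  assumes q: "0 < q" "q < 1"
    and nu: "\<nu> > -1"
    and jpos: "j 1 > 0"
    and jmono: "strict_mono_on {1..} j"
    and jzeros: "{x::real. x > 0 \<and> hej q \<nu> (of_real x) = 0} = j ` {1..}"
  shows "\<forall>n\<ge>1. \<forall>m\<ge>1.
      qint q (\<lambda>x. x * hej q \<nu> (of_real (q * j n) * x) * hej q \<nu> (of_real (q * j m) * x)) 1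
        = - (1/2) * (1 - of_real q) * of_real (q powr (\<nu> - 1))
            * hej q (\<nu> + 1) (of_real (q * j n)) * deriv (hej q \<nu>) (of_real (j n))
            * (if n = m then 1 else 0)
    \<and> - (1/2) * (1 - of_real q) * of_real (q powr (\<nu> - 1))
            * hej q (\<nu> + 1) (of_real (q * j n)) * deriv (hej q \<nu>) (of_real (j n))
        = (1/2) * (1 - of_real q)^2 * of_real (q powr (\<nu> - 2))
            * qder q (hej q \<nu>) (of_real (j n)) * deriv (hej q \<nu>) (of_real (j n))
    \<and> (1/2) * (1 - of_real q)^2 * of_real (q powr (\<nu> - 2))
            * qder q (hej q \<nu>) (of_real (j n)) * deriv (hej q \<nu>) (of_real (j n))
        = - (1/2) * (1 - of_real q) * of_real (q powr (\<nu> - 2)) / of_real (j n)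
            * hej q \<nu> (of_real (q * j n)) * deriv (hej q \<nu>) (of_real (j n))
    \<and> - (1/2) * (1 - of_real q) * of_real (q powr (\<nu> - 2)) / of_real (j n)
            * hej q \<nu> (of_real (q * j n)) * deriv (hej q \<nu>) (of_real (j n))
        = - (1/2) * (1 - of_real q) * of_real (q powr (-2))
            * hej q (\<nu> + 1) (of_real (j n)) * deriv (hej q \<nu>) (of_real (j n))"
proof (intro allI impI, goal_cases)
  case (1 n m)
  have zero: "j k > 0" "hej q \<nu> (of_real (j k)) = 0" if "k \<ge> 1" for k
  proof -
    have "j k \<in> {x. x > 0 \<and> hej q \<nu> (of_real x) = 0}"
      unfolding jzeros using that by simp
    then show "j k > 0" "hej q \<nu> (of_real (j k)) = 0"
      by simp_all
  qed
  have "j n = j m \<longleftrightarrow> n = m"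
    using strict_mono_on_eqD[OF jmono] 1 by auto
  then show ?case
    using qint_hej_zeros[OF q nu zero(1)[OF 1(1)] zero(1)[OF 1(2)] zero(2)[OF 1(1)] zero(2)[OF 1(2)]]
      hej_zero_norm_constant_forms[OF q nu zero[OF 1(1)]]
    by simp
qed

end
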